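(* Let $f_1,\ldots,f_k\in\mathbb{R}[X_1,\ldots,X_n]$ with $\deg f_i<d$ for all $i$, and suppose that the origin is not a solution of the system $f_1\ge 0,\ldots,f_k\ge 0$ and that the solution set $\{x\in\mathbb{R}^n: f_1(x)\ge0,\ldots,f_k(x)\ge 0\}$ is bounded. Let $D$ be the minimal even integer not less than $kd+1$ and, for a parameter $\varepsilon$, let $$g(\varepsilon)=\prod_{1\le i\le k}(f_i+\varepsilon)-\varepsilon^{k+1}\sum_{1\le j\le n}X_j^{D}.$$ If the system $f_1\ge 0,\ldots,f_k\ge 0$ has a solution in $\mathbb{R}^n$, then there is a solution $v'$ of it which is a limit of real roots of the system $\frac{\partial g(\varepsilon)}{\partial X_1}=\cdots=\frac{\partial g(\varepsilon)}{\partial X_n}=0$ as $\varepsilon\to 0^+$; that is, there are positive numbers $\varepsilon_j\to 0$ and points $v_j\in\mathbb{R}^n$ with $\frac{\partial g(\varepsilon_j)}{\partial X_l}(v_j)=0$ for all $1\le l\le n$ such that $v_j\to v'$. *)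

theory Defs
  imports "HOL-Analysis.Analysis"
begin

definition poly_deg_lt :: "nat \<Rightarrow> (real^'n \<Rightarrow> real) \<Rightarrow> bool" where
  "poly_deg_lt d f \<longleftrightarrow>
     (\<exists>c :: ('n \<Rightarrow> nat) \<Rightarrow> real.
        finite {\<alpha>. c \<alpha> \<noteq> 0} \<and>
        (\<forall>\<alpha>. c \<alpha> \<noteq> 0 \<longrightarrow> (\<Sum>i\<in>UNIV. \<alpha> i) < d) \<and>
        (\<forall>x. f x = (\<Sum>\<alpha>\<in>{\<alpha>. c \<alpha> \<noteq> 0}. c \<alpha> * (\<Prod>i\<in>UNIV. (x$i) ^ (\<alpha> i)))))"

definition min_even_ge :: "nat \<Rightarrow> nat" where
  "min_even_ge m = (if even m then m else m + 1)"

definition gfun :: "nat \<Rightarrow> nat \<Rightarrow> (nat \<Rightarrow> real^'n \<Rightarrow> real) \<Rightarrow> real \<Rightarrow> real^'n \<Rightarrow> real" where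
  "gfun k d f \<epsilon> x =
     (\<Prod>i<k. f i x + \<epsilon>) - \<epsilon> ^ (k + 1) * (\<Sum>j\<in>UNIV. (x$j) ^ min_even_ge (k * d + 1))"

definition partial_zero :: "(real^'n \<Rightarrow> real) \<Rightarrow> 'n \<Rightarrow> real^'n \<Rightarrow> bool" where
  "partial_zero h l x \<longleftrightarrow> ((\<lambda>t. h (x + t *\<^sub>R axis l 1)) has_real_derivative 0) (at 0)"

end

theory Submission
  imports Defs
begin

(* Let R bound the solution set. For small \<epsilon> > 0, g(\<epsilon>) attains its maximum on the compact
   region {|x| \<le> R, f_i(x) \<ge> -\<epsilon>}. At a solution x0 the product is at least \<epsilon>^k, which
   dominates \<epsilon>^(k+1) * sum_j x0_j^D, so the maximum is positive. It is therefore not attained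
   where some f_i = -\<epsilon> (there the product vanishes and g(\<epsilon>) \<le> 0 because D is even), nor on
   the sphere |x| = R, where some f_i is uniformly negative. So the maximiser is an interior
   critical point, and as \<epsilon> \<rightarrow> 0 a convergent subsequence of these points tends to a solution. *)

lemma differentiable_prod:
  fixes f :: "'i \<Rightarrow> 'a::real_normed_vector \<Rightarrow> real"
  assumes "\<And>i. i \<in> I \<Longrightarrow> f i differentiable (at x)"
  shows "(\<lambda>x. \<Prod>i\<in>I. f i x) differentiable (at x)"
  using assms by (induction I rule: infinite_finite_induct) auto

lemma differentiable_vec_nth: "(\<lambda>x::real^'n. x $ i) differentiable (at x)"
  by (simp add: bounded_linear_imp_differentiable bounded_linear_vec_nth)

lemma poly_deg_lt_differentiable:
  fixes f :: "real^'n \<Rightarrow> real"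
  assumes "poly_deg_lt d f"
  shows "f differentiable (at x)"
proof -
  obtain c where "\<forall>x. f x = (\<Sum>\<alpha>\<in>{\<alpha>. c \<alpha> \<noteq> 0}. c \<alpha> * (\<Prod>i\<in>UNIV. (x$i) ^ (\<alpha> i)))"
    and "finite {\<alpha>. c \<alpha> \<noteq> 0}"
    using assms unfolding poly_deg_lt_def by blast
  then have "f = (\<lambda>x. \<Sum>\<alpha>\<in>{\<alpha>. c \<alpha> \<noteq> 0}. c \<alpha> * (\<Prod>i\<in>UNIV. (x$i) ^ (\<alpha> i)))"
    by auto
  moreover have "(\<lambda>x. \<Sum>\<alpha>\<in>{\<alpha>. c \<alpha> \<noteq> 0}. c \<alpha> * (\<Prod>i\<in>UNIV. (x$i) ^ (\<alpha> i))) differentiable (at x)"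
    using \<open>finite {\<alpha>. c \<alpha> \<noteq> 0}\<close>
    by (intro differentiable_sum ballI differentiable_mult differentiable_const
        differentiable_prod differentiable_power differentiable_vec_nth)
  ultimately show ?thesis
    by simp
qed

lemma poly_deg_lt_isCont: "poly_deg_lt d f \<Longrightarrow> isCont f x"
  by (simp add: poly_deg_lt_differentiable differentiable_imp_continuous_within)

lemma partial_zero_at_local_max:
  fixes h :: "real^'n \<Rightarrow> real"
  assumes "h differentiable (at v)" and "eventually (\<lambda>y. h y \<le> h v) (at v)"
  shows "partial_zero h l v"
proof -
  obtain h' where h': "(h has_derivative h') (at v)"
    using assms(1) unfolding differentiable_def by blast
  from h' assms(2) have "h' = (\<lambda>_. 0)"
    by (rule has_derivative_local_max)
  with h' have "((\<lambda>t. h (v + t *\<^sub>R axis l 1)) has_derivative (\<lambda>_. 0)) (at 0)"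
    by (auto intro!: derivative_eq_intros has_derivative_compose[where f = "\<lambda>t. v + t *\<^sub>R axis l 1"])
  then show ?thesis
    unfolding partial_zero_def by (rule has_derivative_imp_has_field_derivative) simp
qed

lemma compact_some_uniformly_negative:
  fixes f :: "nat \<Rightarrow> 'a::topological_space \<Rightarrow> real"
  assumes "compact S" and cont: "\<And>i. i < k \<Longrightarrow> continuous_on S (f i)"
    and neg: "\<And>x. x \<in> S \<Longrightarrow> \<exists>i<k. f i x < 0"
  obtains \<delta> where "0 < \<delta>" and "\<And>x. x \<in> S \<Longrightarrow> \<exists>i<k. f i x \<le> -\<delta>"
proof (cases "S = {}")
  case False
  (* \<psi> is negative on S, hence so is its maximum - k \<delta>; if all f i x > - \<delta>, then \<psi> x > - k \<delta>. *)
  define \<psi> where "\<psi> x = (\<Sum>i<k. min 0 (f i x))" for x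
  have "continuous_on S \<psi>"
    unfolding \<psi>_def by (intro continuous_intros cont) simp
  then obtain m where "m \<in> S" and m_max: "\<And>x. x \<in> S \<Longrightarrow> \<psi> x \<le> \<psi> m"
    using continuous_attains_sup[OF \<open>compact S\<close> False] by blast
  obtain i where "i < k" "f i m < 0"
    using neg[OF \<open>m \<in> S\<close>] by blast
  then have "\<psi> m < (\<Sum>i<k. 0)"
    unfolding \<psi>_def by (intro sum_strict_mono_ex1) (auto intro!: bexI[of _ i])
  define \<delta> where "\<delta> = - \<psi> m / k"
  have "k > 0"
    using \<open>i < k\<close> by simp
  have "0 < \<delta>"
    unfolding \<delta>_def using \<open>\<psi> m < (\<Sum>i<k. 0)\<close> \<open>k > 0\<close> by (simp add: divide_neg_pos)
  show ?thesis
  proof (rule that[OF \<open>0 < \<delta>\<close>])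
    fix x assume "x \<in> S"
    show "\<exists>i<k. f i x \<le> -\<delta>"
    proof (rule ccontr)
      assume "\<not> ?thesis"
      then have "(\<Sum>i<k. -\<delta>) < \<psi> x"
        unfolding \<psi>_def[of x] using \<open>k > 0\<close> \<open>0 < \<delta>\<close>
        by (intro sum_strict_mono) (auto simp: min_def)
      moreover have "(\<Sum>i<k. -\<delta>) = \<psi> m"
        unfolding \<delta>_def using \<open>k > 0\<close> by simp
      ultimately show False
        using m_max[OF \<open>x \<in> S\<close>] by simp
    qed
  qed
qed (use that[of 1] in simp)

lemma compact_tendsto_zero_choice:
  fixes K :: "'a::metric_space set"
  assumes "compact K" and "0 < e" and ex_v: "\<And>\<epsilon>. 0 < \<epsilon> \<Longrightarrow> \<epsilon> < e \<Longrightarrow> \<exists>v\<in>K. P \<epsilon> v"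
  obtains \<epsilon> :: "nat \<Rightarrow> real" and v v'
  where "\<And>j. 0 < \<epsilon> j" "\<epsilon> \<longlonglongrightarrow> 0" "\<And>j. P (\<epsilon> j) (v j)" "v \<longlonglongrightarrow> v'"
proof -
  define \<epsilon>0 where "\<epsilon>0 j = e * inverse (real (Suc (Suc j)))" for j
  have \<epsilon>0_range: "0 < \<epsilon>0 j" "\<epsilon>0 j < e" for j
    unfolding \<epsilon>0_def using \<open>0 < e\<close> by (simp_all add: mult_less_cancel_left1 inverse_less_1_iff)
  have "(\<lambda>j. inverse (real (Suc (Suc j)))) \<longlonglongrightarrow> 0"
    by (rule LIMSEQ_Suc[OF LIMSEQ_inverse_real_of_nat])
  then have \<epsilon>0_lim: "\<epsilon>0 \<longlonglongrightarrow> 0"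
    unfolding \<epsilon>0_def by (rule tendsto_mult_right_zero)
  have "\<forall>j. \<exists>v. v \<in> K \<and> P (\<epsilon>0 j) v"
    using ex_v \<epsilon>0_range by blast
  then obtain w where w: "\<forall>j. w j \<in> K \<and> P (\<epsilon>0 j) (w j)"
    by (rule choice[THEN exE])
  then obtain v' r where "strict_mono r" "(w \<circ> r) \<longlonglongrightarrow> v'"
    using seq_compactE[OF compact_imp_seq_compact[OF \<open>compact K\<close>]] by blast
  show ?thesis
  proof (rule that[of "\<epsilon>0 \<circ> r" "w \<circ> r" v'])
    show "0 < (\<epsilon>0 \<circ> r) j" "P ((\<epsilon>0 \<circ> r) j) ((w \<circ> r) j)" for j
      using \<epsilon>0_range w by simp_all
    show "(\<epsilon>0 \<circ> r) \<longlonglongrightarrow> 0"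
      using LIMSEQ_subseq_LIMSEQ[OF \<epsilon>0_lim \<open>strict_mono r\<close>] .
  qed fact
qed

lemma even_min_even_ge: "even (min_even_ge m)"
  by (simp add: min_even_ge_def)

lemma gfun_pos_at_solution:
  assumes "\<forall>i<k. 0 \<le> f i x" and "0 < \<epsilon>"
    and small: "\<epsilon> * (\<Sum>j\<in>UNIV. (x$j) ^ min_even_ge (k * d + 1)) < 1"
  shows "0 < gfun k d f \<epsilon> x"
proof -
  have "\<epsilon> ^ (k + 1) * (\<Sum>j\<in>UNIV. (x$j) ^ min_even_ge (k * d + 1)) < \<epsilon> ^ k"
    using mult_strict_left_mono[OF small, of "\<epsilon> ^ k"] \<open>0 < \<epsilon>\<close> by (simp add: ac_simps)
  also have "\<epsilon> ^ k = (\<Prod>i<k. \<epsilon>)"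
    by simp
  also have "\<dots> \<le> (\<Prod>i<k. f i x + \<epsilon>)"
    using assms by (intro prod_mono) auto
  finally show ?thesis
    unfolding gfun_def by simp
qed

lemma gfun_nonpos_if_constraint_eq:
  assumes "i < k" and "f i x = - \<epsilon>" and "0 \<le> \<epsilon>"
  shows "gfun k d f \<epsilon> x \<le> 0"
proof -
  have "(\<Prod>i<k. f i x + \<epsilon>) = 0"
    using assms by (intro prod_zero) (auto intro!: bexI[of _ i])
  moreover have "0 \<le> \<epsilon> ^ (k + 1) * (\<Sum>j\<in>UNIV. (x$j) ^ min_even_ge (k * d + 1))"
    using \<open>0 \<le> \<epsilon>\<close>
    by (intro mult_nonneg_nonneg zero_le_power sum_nonneg zero_le_even_power even_min_even_ge)
  ultimately show ?thesis
    unfolding gfun_def by linarith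
qed

context
  fixes f :: "nat \<Rightarrow> real^'n \<Rightarrow> real" and k d :: nat
  assumes deg: "\<And>i. i < k \<Longrightarrow> poly_deg_lt d (f i)"
begin

lemma constraint_continuous_on: "i < k \<Longrightarrow> continuous_on S (f i)"
  by (simp add: continuous_at_imp_continuous_on poly_deg_lt_isCont[OF deg])

lemma gfun_differentiable: "gfun k d f \<epsilon> differentiable (at x)"
proof -
  have "f i differentiable (at x)" if "i \<in> {..<k}" for i
    using that deg poly_deg_lt_differentiable by blast
  then show ?thesis
    unfolding gfun_def[abs_def]
    by (auto intro!: differentiable_diff differentiable_mult differentiable_prod
        differentiable_add differentiable_sum differentiable_power differentiable_vec_nth)
qed

lemma gfun_interior_critical_point:
  assumes "0 < \<epsilon>"
    and x0: "norm x0 \<le> R" "\<forall>i<k. -\<epsilon> \<le> f i x0" "0 < gfun k d f \<epsilon> x0"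
    and sphere: "\<And>x. norm x = R \<Longrightarrow> \<exists>i<k. f i x < -\<epsilon>"
  shows "\<exists>v\<in>cball 0 R. (\<forall>i<k. -\<epsilon> < f i v) \<and> (\<forall>l. partial_zero (gfun k d f \<epsilon>) l v)"
proof -
  define C where "C = cball 0 R \<inter> (\<Inter>i<k. {x. -\<epsilon> \<le> f i x})"
  define U where "U = ball 0 R \<inter> (\<Inter>i<k. {x. -\<epsilon> < f i x})"
  have "compact C"
    unfolding C_def
    by (intro compact_Int_closed compact_cball closed_INT ballI closed_Collect_le
        continuous_on_const constraint_continuous_on) simp
  moreover have "x0 \<in> C"
    unfolding C_def using x0 by auto
  moreover have "continuous_on C (gfun k d f \<epsilon>)"
    by (intro continuous_at_imp_continuous_on ballI differentiable_imp_continuous_within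
        gfun_differentiable)
  ultimately obtain v where "v \<in> C" and v_max: "\<And>y. y \<in> C \<Longrightarrow> gfun k d f \<epsilon> y \<le> gfun k d f \<epsilon> v"
    using continuous_attains_sup[of C "gfun k d f \<epsilon>"] by blast
  have above: "-\<epsilon> < f i v" if "i < k" for i
  proof -
    have "gfun k d f \<epsilon> v > 0"
      using v_max[OF \<open>x0 \<in> C\<close>] x0 by simp
    then have "f i v \<noteq> -\<epsilon>"
      using gfun_nonpos_if_constraint_eq[OF \<open>i < k\<close>, of f v \<epsilon> d] \<open>0 < \<epsilon>\<close> by force
    then show ?thesis
      using \<open>v \<in> C\<close> \<open>i < k\<close> unfolding C_def by force
  qed
  moreover have "norm v < R"
    using \<open>v \<in> C\<close> sphere[of v] above unfolding C_def by force
  ultimately have "v \<in> U"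
    unfolding U_def by simp
  have "open U"
    unfolding U_def
    by (intro open_Int open_ball open_INT finite_lessThan ballI open_Collect_less
        continuous_on_const constraint_continuous_on) simp
  moreover have "U \<subseteq> C"
    unfolding U_def C_def by (auto simp: less_imp_le)
  ultimately have "eventually (\<lambda>y. gfun k d f \<epsilon> y \<le> gfun k d f \<epsilon> v) (at v)"
    using \<open>v \<in> U\<close> v_max unfolding eventually_at_topological by blast
  then have "partial_zero (gfun k d f \<epsilon>) l v" for l
    by (intro partial_zero_at_local_max gfun_differentiable)
  then show ?thesis
    using \<open>v \<in> U\<close> unfolding U_def by auto
qed

lemma small_eps_critical_points:
  assumes bdd: "bounded {x. \<forall>i<k. 0 \<le> f i x}" and sol: "\<exists>x. \<forall>i<k. 0 \<le> f i x"
  obtains e R where "0 < e"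
    and "\<And>\<epsilon>. 0 < \<epsilon> \<Longrightarrow> \<epsilon> < e \<Longrightarrow>
           \<exists>v\<in>cball 0 R. (\<forall>i<k. -\<epsilon> < f i v) \<and> (\<forall>l. partial_zero (gfun k d f \<epsilon>) l v)"
proof -
  obtain R where R: "{x. \<forall>i<k. 0 \<le> f i x} \<subseteq> ball 0 R"
    using bounded_subset_ballD[OF bdd] by blast
  have "\<exists>i<k. f i x < 0" if "x \<in> sphere 0 R" for x
  proof -
    have "x \<notin> {x. \<forall>i<k. 0 \<le> f i x}"
      using R that by auto
    then show ?thesis
      by (auto simp: not_le)
  qed
  then obtain \<delta> where "0 < \<delta>" and \<delta>: "\<And>x. x \<in> sphere 0 R \<Longrightarrow> \<exists>i<k. f i x \<le> -\<delta>"
    using compact_some_uniformly_negative[OF compact_sphere] constraint_continuous_on by metis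
  obtain x0 where x0: "\<forall>i<k. 0 \<le> f i x0"
    using sol by blast
  define S where "S = (\<Sum>j\<in>UNIV. (x0$j) ^ min_even_ge (k * d + 1))"
  have "0 \<le> S"
    unfolding S_def by (intro sum_nonneg zero_le_even_power even_min_even_ge)
  show ?thesis
  proof (rule that[of "min \<delta> (1 / (S + 1))"])
    show "0 < min \<delta> (1 / (S + 1))"
      using \<open>0 < \<delta>\<close> \<open>0 \<le> S\<close> by simp
    fix \<epsilon> :: real assume "0 < \<epsilon>" "\<epsilon> < min \<delta> (1 / (S + 1))"
    then have "\<epsilon> * (S + 1) < 1"
      using \<open>0 \<le> S\<close> by (simp add: less_divide_eq)
    then have "\<epsilon> * S < 1"
      using \<open>0 < \<epsilon>\<close> by (simp add: distrib_left)
    show "\<exists>v\<in>cball 0 R. (\<forall>i<k. -\<epsilon> < f i v) \<and> (\<forall>l. partial_zero (gfun k d f \<epsilon>) l v)"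
    proof (rule gfun_interior_critical_point[OF \<open>0 < \<epsilon>\<close>])
      have "x0 \<in> ball 0 R"
        using R x0 by blast
      then show "norm x0 \<le> R"
        by simp
      show "\<forall>i<k. -\<epsilon> \<le> f i x0"
        using x0 \<open>0 < \<epsilon>\<close> by (meson order_trans less_imp_le neg_le_0_iff_le)
      show "0 < gfun k d f \<epsilon> x0"
        using gfun_pos_at_solution[of k f x0 \<epsilon> d] x0 \<open>0 < \<epsilon>\<close> \<open>\<epsilon> * S < 1\<close>
        unfolding S_def by blast
      show "\<exists>i<k. f i x < -\<epsilon>" if "norm x = R" for x
      proof -
        have "x \<in> sphere 0 R"
          using that by simp
        then obtain i where "i < k" "f i x \<le> -\<delta>"
          using \<delta> by blast
        moreover have "\<epsilon> < \<delta>"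
          using \<open>\<epsilon> < min \<delta> (1 / (S + 1))\<close> by simp
        ultimately show ?thesis
          by (intro exI[of _ i]) auto
      qed
    qed
  qed
qed

end

theorem lemma5p1:
  fixes f :: "nat \<Rightarrow> real^'n \<Rightarrow> real" and k d :: nat
  assumes deg: "\<And>i. i < k \<Longrightarrow> poly_deg_lt d (f i)"
    and origin: "\<not> (\<forall>i<k. f i 0 \<ge> 0)"
    and bdd: "bounded {x. \<forall>i<k. f i x \<ge> 0}"
    and sol: "\<exists>x. \<forall>i<k. f i x \<ge> 0"
  shows "\<exists>v' (\<epsilon>::nat \<Rightarrow> real) (v::nat \<Rightarrow> real^'n).
           (\<forall>i<k. f i v' \<ge> 0) \<and>
           (\<forall>j. \<epsilon> j > 0) \<and> \<epsilon> \<longlonglongrightarrow> 0 \<and>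
           (\<forall>j l. partial_zero (gfun k d f (\<epsilon> j)) l (v j)) \<and>
           v \<longlonglongrightarrow> v'"
proof -
  obtain e R where "0 < e" and crit: "\<And>\<epsilon>. 0 < \<epsilon> \<Longrightarrow> \<epsilon> < e \<Longrightarrow>
      \<exists>v\<in>cball 0 R. (\<forall>i<k. -\<epsilon> < f i v) \<and> (\<forall>l. partial_zero (gfun k d f \<epsilon>) l v)"
    using small_eps_critical_points[OF deg bdd sol] by blast
  obtain \<epsilon> v v' where \<epsilon>: "\<And>j. 0 < \<epsilon> j" "\<epsilon> \<longlonglongrightarrow> 0"
    and v: "\<And>j. (\<forall>i<k. -\<epsilon> j < f i (v j)) \<and> (\<forall>l. partial_zero (gfun k d f (\<epsilon> j)) l (v j))"
    and "v \<longlonglongrightarrow> v'"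
    using compact_tendsto_zero_choice
        [where P = "\<lambda>\<epsilon> v. (\<forall>i<k. -\<epsilon> < f i v) \<and> (\<forall>l. partial_zero (gfun k d f \<epsilon>) l v)",
         OF compact_cball \<open>0 < e\<close> crit]
    by blast
  have "0 \<le> f i v'" if "i < k" for i
  proof (rule tendsto_le[OF trivial_limit_sequentially])
    show "(\<lambda>j. f i (v j)) \<longlonglongrightarrow> f i v'"
      using isCont_tendsto_compose[OF poly_deg_lt_isCont[OF deg[OF that]] \<open>v \<longlonglongrightarrow> v'\<close>] .
    show "(\<lambda>j. - \<epsilon> j) \<longlonglongrightarrow> 0"
      using tendsto_minus[OF \<epsilon>(2)] by simp
    show "eventually (\<lambda>j. - \<epsilon> j \<le> f i (v j)) sequentially"
      using v that by (intro always_eventually allI) (simp add: less_imp_le)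
  qed
  then show ?thesis
    using \<epsilon> v \<open>v \<longlonglongrightarrow> v'\<close> by (intro exI[of _ v'] exI[of _ \<epsilon>] exI[of _ v]) simp
qed

end
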